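(* Let $r\ge 2$ be an even integer, $T>0$, and let $u$ be a smooth function on $[a,b]\times[0,T]$ with $u(a,t)=u(b,t)=0$. Let $S[u]=\int_0^T\int_a^b \frac1r|u_x|^r\,dx\,dt$. For smooth $w(x,t)$ with $w(x,0)=w(x,T)=0$, consider the constrained variation $\delta u=w_t-wu_x+uw_x$, and the first variation $\delta S=\int_0^T\int_a^b |u_x|^{r-2}u_x\,(\delta u)_x\,dx\,dt$. Then $$\delta S=\int_0^T\int_a^b\Big(\big(|u_x|^{r-2}u_x\big)_{xt}+\big(|u_x|^{r-2}u_x\big)_xu_x+\Big(\big(|u_x|^{r-2}u_x\big)_xu\Big)_x\Big)w\,dx\,dt,$$ so that $\delta S=0$ for all such $w$ if and only if $u$ satisfies the $r$-Hunter-Saxton equation $$\big(|u_x|^{r-2}u_x\big)_{xt}+\big(|u_x|^{r-2}u_x\big)_xu_x+\Big(\big(|u_x|^{r-2}u_x\big)_xu\Big)_x=0.$$ That is, the $r$-Hunter-Saxton equation is the Euler-Poincaré equation for the Lagrangian $l[u]=\int_a^b\frac1r|u_x|^r\,dx$.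
   Context: The constrained variations $\delta u=w_t-wu_x+uw_x$ are those induced on the Eulerian velocity $u$ by variations of a time-dependent family of diffeomorphisms $g$ of $[a,b]$ with $g_t(x,t)=u(g(x,t),t)$; the Euler-Poincaré equation is the stationarity condition of the action under such variations. *)

theory Defs
  imports "HOL-Analysis.Analysis"
begin

text \<open>Functions on the space-time rectangle are functions of the pair (x,t).
  Partial derivatives are taken within the closed set S (one-sided at the boundary).\<close>

definition px :: "(real \<times> real) set \<Rightarrow> (real \<times> real \<Rightarrow> real) \<Rightarrow> real \<times> real \<Rightarrow> real" where
  "px S f p = frechet_derivative f (at p within S) (1, 0)"

definition pt :: "(real \<times> real) set \<Rightarrow> (real \<times> real \<Rightarrow> real) \<Rightarrow> real \<times> real \<Rightarrow> real" where
  "pt S f p = frechet_derivative f (at p within S) (0, 1)"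

text \<open>Smoothness (C-infinity) on a closed set S: differentiable within S at every point of S,
  with both partial derivatives again smooth on S.\<close>

coinductive C_inf_on :: "(real \<times> real) set \<Rightarrow> (real \<times> real \<Rightarrow> real) \<Rightarrow> bool" where
  "(\<forall>p\<in>S. f differentiable (at p within S)) \<Longrightarrow> C_inf_on S (px S f) \<Longrightarrow> C_inf_on S (pt S f)
   \<Longrightarrow> C_inf_on S f"

definition rect :: "real \<Rightarrow> real \<Rightarrow> real \<Rightarrow> (real \<times> real) set" where
  "rect a b T = {a..b} \<times> {0..T}"

definition flux :: "nat \<Rightarrow> (real \<times> real) set \<Rightarrow> (real \<times> real \<Rightarrow> real) \<Rightarrow> real \<times> real \<Rightarrow> real" where
  "flux r S u p = \<bar>px S u p\<bar> ^ (r - 2) * px S u p"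

definition var_u :: "(real \<times> real) set \<Rightarrow> (real \<times> real \<Rightarrow> real) \<Rightarrow> (real \<times> real \<Rightarrow> real) \<Rightarrow> real \<times> real \<Rightarrow> real" where
  "var_u S u w p = pt S w p - w p * px S u p + u p * px S w p"

definition first_var :: "nat \<Rightarrow> real \<Rightarrow> real \<Rightarrow> real \<Rightarrow> (real \<times> real \<Rightarrow> real) \<Rightarrow> (real \<times> real \<Rightarrow> real) \<Rightarrow> real" where
  "first_var r a b T u w =
     integral {0..T} (\<lambda>t. integral {a..b} (\<lambda>x.
        flux r (rect a b T) u (x, t) * px (rect a b T) (var_u (rect a b T) u w) (x, t)))"

definition rHS :: "nat \<Rightarrow> (real \<times> real) set \<Rightarrow> (real \<times> real \<Rightarrow> real) \<Rightarrow> real \<times> real \<Rightarrow> real" where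
  "rHS r S u p = pt S (px S (flux r S u)) p + px S (flux r S u) p * px S u p
      + px S (\<lambda>q. px S (flux r S u) q * u q) p"

text \<open>Admissible variation fields: smooth, vanishing at t = 0, T and (being generated by
  diffeomorphisms of [a,b]) at x = a, b.\<close>
definition admissible :: "real \<Rightarrow> real \<Rightarrow> real \<Rightarrow> (real \<times> real \<Rightarrow> real) \<Rightarrow> bool" where
  "admissible a b T w \<longleftrightarrow> C_inf_on (rect a b T) w
     \<and> (\<forall>x\<in>{a..b}. w (x, 0) = 0 \<and> w (x, T) = 0)
     \<and> (\<forall>t\<in>{0..T}. w (a, t) = 0 \<and> w (b, t) = 0)"

end

theory Submission
  imports Defs
begin

text \<open>
  Write \<open>m = |u_x|^(r-2) u_x\<close>. The product rule gives the pointwise identity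
  \<open>m (\<delta>u)_x = G_x - H_t + rHS(u) w\<close>, where \<open>G = m (w_t + u w_x - w u_x) - m_x u w\<close>
  and \<open>H = m_x w\<close>. Since \<open>u\<close>, \<open>w\<close> and hence \<open>w_t\<close> vanish on the sides \<open>x = a, b\<close>,
  so does \<open>G\<close>; since \<open>w\<close> vanishes at \<open>t = 0, T\<close>, so does \<open>H\<close>. Integrating, the two
  divergence terms drop out, which gives the formula for \<open>\<delta>S\<close>. Conversely, if \<open>\<delta>S = 0\<close>
  for all admissible \<open>w\<close>, test with \<open>w = rHS(u) \<phi>\<close>, where \<open>\<phi> = (x - a)(b - x) t (T - t)\<close>
  is positive inside the rectangle and zero on its boundary: then \<open>\<integral>\<integral> rHS(u)\<^sup>2 \<phi> = 0\<close>,
  so \<open>rHS(u)\<close> vanishes in the interior and, by continuity, on the whole rectangle.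
\<close>

section \<open>Partial derivatives within a set\<close>

lemma frechet_derivative_cong_on:
  assumes "\<forall>q\<in>S. f q = g q" and "p \<in> S"
  shows "frechet_derivative f (at p within S) = frechet_derivative g (at p within S)"
proof -
  have "(f has_derivative D) (at p within S) \<longleftrightarrow> (g has_derivative D) (at p within S)" for D
    using assms by (metis has_derivative_transform)
  then show ?thesis by (simp add: frechet_derivative_def)
qed

lemma partials_cong_on:
  assumes "\<forall>q\<in>S. f q = g q" and "p \<in> S"
  shows "px S f p = px S g p" and "pt S f p = pt S g p"
  using frechet_derivative_cong_on[OF assms] by (simp_all add: px_def pt_def)

lemma has_derivative_partials:
  assumes "f differentiable (at p within S)"
  shows "(f has_derivative (\<lambda>h. fst h * px S f p + snd h * pt S f p)) (at p within S)"
proof -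
  let ?D = "frechet_derivative f (at p within S)"
  have D: "(f has_derivative ?D) (at p within S)"
    using assms frechet_derivative_works by blast
  interpret D: linear ?D using D has_derivative_linear by blast
  have "?D (x, y) = x * px S f p + y * pt S f p" for x y
  proof -
    have "?D (x, y) = ?D (x *\<^sub>R (1, 0) + y *\<^sub>R (0, 1))" by simp
    also have "\<dots> = x * ?D (1, 0) + y * ?D (0, 1)" by (simp only: D.add D.scale real_scaleR_def)
    finally show ?thesis by (simp only: px_def pt_def)
  qed
  then have "?D = (\<lambda>h. fst h * px S f p + snd h * pt S f p)"
    by auto
  then show ?thesis using D by simp
qed

lemma has_vector_derivative_x_section:
  assumes "G differentiable (at (x, t) within S)" and "(\<lambda>x. (x, t)) ` I \<subseteq> S"
  shows "((\<lambda>x. G (x, t)) has_vector_derivative px S G (x, t)) (at x within I)"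
proof -
  have "((\<lambda>x. (x, t)) has_derivative (\<lambda>h. (h, 0))) (at x within I)"
    by (auto intro!: derivative_eq_intros)
  from diff_chain_within[OF this has_derivative_subset[OF has_derivative_partials[OF assms(1)] assms(2)]]
  show ?thesis by (simp add: has_vector_derivative_def o_def mult.commute)
qed

lemma has_vector_derivative_t_section:
  assumes "G differentiable (at (x, t) within S)" and "(\<lambda>t. (x, t)) ` I \<subseteq> S"
  shows "((\<lambda>t. G (x, t)) has_vector_derivative pt S G (x, t)) (at t within I)"
proof -
  have "((\<lambda>t. (x, t)) has_derivative (\<lambda>h. (0, h))) (at t within I)"
    by (auto intro!: derivative_eq_intros)
  from diff_chain_within[OF this has_derivative_subset[OF has_derivative_partials[OF assms(1)] assms(2)]]
  show ?thesis by (simp add: has_vector_derivative_def o_def mult.commute)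
qed

lemma rect_eq_cbox: "rect a b T = cbox (a, 0) (b, T)"
  by (simp add: rect_def cbox_Pair_eq)

locale space_time_rectangle =
  fixes a b T :: real
  assumes a_lt_b: "a < b" and T_pos: "0 < T"
begin

abbreviation \<Omega> where "\<Omega> \<equiv> rect a b T"

lemma partials_of_has_derivative:
  assumes p: "p \<in> \<Omega>" and D: "(f has_derivative D) (at p within \<Omega>)"
  shows "px \<Omega> f p = D (1, 0)" and "pt \<Omega> f p = D (0, 1)"
proof -
  have "(f has_derivative frechet_derivative f (at p within \<Omega>)) (at p within \<Omega>)"
    using D frechet_derivative_works differentiable_def by blast
  then have "frechet_derivative f (at p within \<Omega>) = D"
    using p D a_lt_b T_pos unfolding rect_eq_cbox
    by (intro frechet_derivative_unique_within_closed_interval) (auto simp: Basis_prod_def)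
  then show "px \<Omega> f p = D (1, 0)" and "pt \<Omega> f p = D (0, 1)"
    by (simp_all add: px_def pt_def)
qed

lemma partials_add:
  assumes "p \<in> \<Omega>"
    and "f differentiable (at p within \<Omega>)" and "g differentiable (at p within \<Omega>)"
  shows "px \<Omega> (\<lambda>q. f q + g q) p = px \<Omega> f p + px \<Omega> g p"
    and "pt \<Omega> (\<lambda>q. f q + g q) p = pt \<Omega> f p + pt \<Omega> g p"
  using partials_of_has_derivative[OF assms(1)
      has_derivative_add[OF has_derivative_partials[OF assms(2)] has_derivative_partials[OF assms(3)]]]
  by simp_all

lemma partials_diff:
  assumes "p \<in> \<Omega>"
    and "f differentiable (at p within \<Omega>)" and "g differentiable (at p within \<Omega>)"
  shows "px \<Omega> (\<lambda>q. f q - g q) p = px \<Omega> f p - px \<Omega> g p"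
    and "pt \<Omega> (\<lambda>q. f q - g q) p = pt \<Omega> f p - pt \<Omega> g p"
  using partials_of_has_derivative[OF assms(1)
      has_derivative_diff[OF has_derivative_partials[OF assms(2)] has_derivative_partials[OF assms(3)]]]
  by simp_all

lemma partials_mult:
  assumes "p \<in> \<Omega>"
    and "f differentiable (at p within \<Omega>)" and "g differentiable (at p within \<Omega>)"
  shows "px \<Omega> (\<lambda>q. f q * g q) p = f p * px \<Omega> g p + px \<Omega> f p * g p"
    and "pt \<Omega> (\<lambda>q. f q * g q) p = f p * pt \<Omega> g p + pt \<Omega> f p * g p"
  using partials_of_has_derivative[OF assms(1)
      has_derivative_mult[OF has_derivative_partials[OF assms(2)] has_derivative_partials[OF assms(3)]]]
  by simp_all

lemma partials_const:
  assumes "p \<in> \<Omega>"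
  shows "px \<Omega> (\<lambda>q. c) p = 0" and "pt \<Omega> (\<lambda>q. c) p = 0"
  using partials_of_has_derivative[OF assms has_derivative_const] by simp_all

lemma partials_fst:
  assumes "p \<in> \<Omega>"
  shows "px \<Omega> fst p = 1" and "pt \<Omega> fst p = 0"
  using partials_of_has_derivative[OF assms bounded_linear_imp_has_derivative[OF bounded_linear_fst]]
  by simp_all

lemma partials_snd:
  assumes "p \<in> \<Omega>"
  shows "px \<Omega> snd p = 0" and "pt \<Omega> snd p = 1"
  using partials_of_has_derivative[OF assms bounded_linear_imp_has_derivative[OF bounded_linear_snd]]
  by simp_all

end

section \<open>Smooth functions on the rectangle\<close>

lemma C_inf_on_differentiable: "C_inf_on S f \<Longrightarrow> p \<in> S \<Longrightarrow> f differentiable (at p within S)"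
  and C_inf_on_px: "C_inf_on S f \<Longrightarrow> C_inf_on S (px S f)"
  and C_inf_on_pt: "C_inf_on S f \<Longrightarrow> C_inf_on S (pt S f)"
  by (auto elim: C_inf_on.cases)

lemma C_inf_on_continuous_on: "C_inf_on S f \<Longrightarrow> continuous_on S f"
  by (meson C_inf_on_differentiable continuous_on_eq_continuous_within
      differentiable_imp_continuous_within)

definition sum_of_products ::
  "((real \<times> real \<Rightarrow> real) \<times> (real \<times> real \<Rightarrow> real)) list \<Rightarrow> real \<times> real \<Rightarrow> real"
  where "sum_of_products L p = (\<Sum>(f, g)\<leftarrow>L. f p * g p)"

definition leibniz_terms ::
  "((real \<times> real \<Rightarrow> real) \<Rightarrow> real \<times> real \<Rightarrow> real) \<Rightarrow>
   ((real \<times> real \<Rightarrow> real) \<times> (real \<times> real \<Rightarrow> real)) list \<Rightarrow>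
   ((real \<times> real \<Rightarrow> real) \<times> (real \<times> real \<Rightarrow> real)) list"
  where "leibniz_terms D L = concat (map (\<lambda>(f, g). [(f, D g), (D f, g)]) L)"

lemma sum_of_products_Nil [simp]: "sum_of_products [] = (\<lambda>p. 0)"
  and sum_of_products_Cons [simp]:
    "sum_of_products ((f, g) # L) = (\<lambda>p. f p * g p + sum_of_products L p)"
  by (auto simp: sum_of_products_def)

lemma leibniz_terms_Nil [simp]: "leibniz_terms D [] = []"
  and leibniz_terms_Cons [simp]:
    "leibniz_terms D ((f, g) # L) = (f, D g) # (D f, g) # leibniz_terms D L"
  by (simp_all add: leibniz_terms_def)

lemma leibniz_terms_preserves:
  "\<forall>(f, g)\<in>set L. P f \<and> P g \<Longrightarrow> (\<And>f. P f \<Longrightarrow> P (D f)) \<Longrightarrow>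
   \<forall>(f, g)\<in>set (leibniz_terms D L). P f \<and> P g"
  by (induction L) auto

lemma differentiable_sum_of_products:
  "\<forall>(f, g)\<in>set L. f differentiable (at p within S) \<and> g differentiable (at p within S) \<Longrightarrow>
   sum_of_products L differentiable (at p within S)"
  by (induction L) auto

context space_time_rectangle
begin

lemma partials_sum_of_products:
  assumes p: "p \<in> \<Omega>"
    and "\<forall>(f, g)\<in>set L. f differentiable (at p within \<Omega>) \<and> g differentiable (at p within \<Omega>)"
  shows "px \<Omega> (sum_of_products L) p = sum_of_products (leibniz_terms (px \<Omega>) L) p
       \<and> pt \<Omega> (sum_of_products L) p = sum_of_products (leibniz_terms (pt \<Omega>) L) p"
  using assms(2)
proof (induction L)
  case Nil
  then show ?case by (simp add: partials_const p)
next
  case (Cons fg L)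
  obtain f g where fg: "fg = (f, g)" by fastforce
  have f: "f differentiable (at p within \<Omega>)" and g: "g differentiable (at p within \<Omega>)"
    and L: "\<forall>(f, g)\<in>set L. f differentiable (at p within \<Omega>) \<and> g differentiable (at p within \<Omega>)"
    using Cons.prems fg by auto
  show ?case
    using Cons.IH[OF L]
    by (simp add: fg partials_add[OF p] partials_mult[OF p f g] f g differentiable_sum_of_products[OF L])
qed

text \<open>By the Leibniz rule, finite sums of products of smooth functions form a class closed under
  \<open>px\<close> and \<open>pt\<close>, i.e. an invariant for coinduction on \<open>C_inf_on\<close>.\<close>

lemma C_inf_on_sum_of_products:
  assumes "\<forall>(f, g)\<in>set L. C_inf_on \<Omega> f \<and> C_inf_on \<Omega> g"
    and "\<forall>p\<in>\<Omega>. h p = sum_of_products L p"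
  shows "C_inf_on \<Omega> h"
proof -
  let ?X = "\<lambda>S h. S = \<Omega> \<and> (\<exists>L. (\<forall>(f, g)\<in>set L. C_inf_on \<Omega> f \<and> C_inf_on \<Omega> g)
                                 \<and> (\<forall>p\<in>\<Omega>. h p = sum_of_products L p))"
  show ?thesis
  proof (rule C_inf_on.coinduct[of ?X])
    show "?X \<Omega> h" using assms by blast
  next
    fix S h' assume "?X S h'"
    then obtain L where S: "S = \<Omega>" and L: "\<forall>(f, g)\<in>set L. C_inf_on \<Omega> f \<and> C_inf_on \<Omega> g"
      and h': "\<forall>p\<in>\<Omega>. h' p = sum_of_products L p" by blast
    have diff_L: "\<forall>(f, g)\<in>set L. f differentiable (at p within \<Omega>) \<and> g differentiable (at p within \<Omega>)"
      if "p \<in> \<Omega>" for p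
      using L that C_inf_on_differentiable by fast
    have diff: "h' differentiable (at p within \<Omega>)" if "p \<in> \<Omega>" for p
      using differentiable_transform_within[OF differentiable_sum_of_products[OF diff_L[OF that]]
          zero_less_one that] h' by simp
    have "\<forall>p\<in>\<Omega>. px \<Omega> h' p = sum_of_products (leibniz_terms (px \<Omega>) L) p"
      and "\<forall>p\<in>\<Omega>. pt \<Omega> h' p = sum_of_products (leibniz_terms (pt \<Omega>) L) p"
      using partials_cong_on[OF h'] partials_sum_of_products[OF _ diff_L] by simp_all
    moreover have "\<forall>(f, g)\<in>set (leibniz_terms (px \<Omega>) L). C_inf_on \<Omega> f \<and> C_inf_on \<Omega> g"
      and "\<forall>(f, g)\<in>set (leibniz_terms (pt \<Omega>) L). C_inf_on \<Omega> f \<and> C_inf_on \<Omega> g"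
      using leibniz_terms_preserves[OF L] C_inf_on_px C_inf_on_pt by blast+
    ultimately have "?X \<Omega> (px \<Omega> h')" and "?X \<Omega> (pt \<Omega> h')"
      by blast+
    then show "\<exists>S' f. S = S' \<and> h' = f \<and> (\<forall>p\<in>S'. f differentiable (at p within S'))
        \<and> (?X S' (px S' f) \<or> C_inf_on S' (px S' f)) \<and> (?X S' (pt S' f) \<or> C_inf_on S' (pt S' f))"
      unfolding S using diff by (intro exI[of _ \<Omega>] exI[of _ h']) simp
  qed
qed

lemma C_inf_on_const: "C_inf_on \<Omega> (\<lambda>p. c)"
proof (rule C_inf_on.intros)
  show "C_inf_on \<Omega> (px \<Omega> (\<lambda>p. c))"
    and "C_inf_on \<Omega> (pt \<Omega> (\<lambda>p. c))"
    by (rule C_inf_on_sum_of_products[of "[]"]; simp add: partials_const)+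
qed simp

lemma C_inf_on_cong:
  "C_inf_on \<Omega> f \<Longrightarrow> \<forall>p\<in>\<Omega>. h p = f p \<Longrightarrow> C_inf_on \<Omega> h"
  by (rule C_inf_on_sum_of_products[of "[(f, \<lambda>_. 1)]"]) (simp_all add: C_inf_on_const)

lemma C_inf_on_mult:
  "C_inf_on \<Omega> f \<Longrightarrow> C_inf_on \<Omega> g \<Longrightarrow> C_inf_on \<Omega> (\<lambda>p. f p * g p)"
  by (rule C_inf_on_sum_of_products[of "[(f, g)]"]) simp_all

lemma C_inf_on_add:
  "C_inf_on \<Omega> f \<Longrightarrow> C_inf_on \<Omega> g \<Longrightarrow> C_inf_on \<Omega> (\<lambda>p. f p + g p)"
  by (rule C_inf_on_sum_of_products[of "[(f, \<lambda>_. 1), (g, \<lambda>_. 1)]"]) (simp_all add: C_inf_on_const)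

lemma C_inf_on_diff:
  "C_inf_on \<Omega> f \<Longrightarrow> C_inf_on \<Omega> g \<Longrightarrow> C_inf_on \<Omega> (\<lambda>p. f p - g p)"
  by (rule C_inf_on_sum_of_products[of "[(f, \<lambda>_. 1), (g, \<lambda>_. -1)]"]) (simp_all add: C_inf_on_const)

lemma C_inf_on_power: "C_inf_on \<Omega> f \<Longrightarrow> C_inf_on \<Omega> (\<lambda>p. f p ^ n)"
  by (induction n) (simp_all add: C_inf_on_const C_inf_on_mult)

lemma C_inf_on_fst: "C_inf_on \<Omega> fst"
proof (rule C_inf_on.intros)
  show "C_inf_on \<Omega> (px \<Omega> fst)"
    by (rule C_inf_on_cong[OF C_inf_on_const[of 1]]) (simp add: partials_fst)
  show "C_inf_on \<Omega> (pt \<Omega> fst)"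
    by (rule C_inf_on_cong[OF C_inf_on_const[of 0]]) (simp add: partials_fst)
qed (simp add: bounded_linear_imp_differentiable bounded_linear_fst)

lemma C_inf_on_snd: "C_inf_on \<Omega> snd"
proof (rule C_inf_on.intros)
  show "C_inf_on \<Omega> (px \<Omega> snd)"
    by (rule C_inf_on_cong[OF C_inf_on_const[of 0]]) (simp add: partials_snd)
  show "C_inf_on \<Omega> (pt \<Omega> snd)"
    by (rule C_inf_on_cong[OF C_inf_on_const[of 1]]) (simp add: partials_snd)
qed (simp add: bounded_linear_imp_differentiable bounded_linear_snd)

end

section \<open>Integration over the rectangle\<close>

lemma integrable_on_rect: "continuous_on (rect a b T) F \<Longrightarrow> F integrable_on rect a b T"
  for F :: "real \<times> real \<Rightarrow> real"
  by (simp add: rect_eq_cbox integrable_continuous)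

lemma integral_rect_iterated:
  fixes F :: "real \<times> real \<Rightarrow> real"
  assumes "continuous_on (rect a b T) F"
  shows "integral (rect a b T) F = integral {0..T} (\<lambda>t. integral {a..b} (\<lambda>x. F (x, t)))"
    and "integral (rect a b T) F = integral {a..b} (\<lambda>x. integral {0..T} (\<lambda>t. F (x, t)))"
proof -
  have cont: "continuous_on (cbox (a, 0) (b, T)) (\<lambda>(x, t). F (x, t))"
    using assms by (simp add: rect_eq_cbox)
  show "integral (rect a b T) F = integral {a..b} (\<lambda>x. integral {0..T} (\<lambda>t. F (x, t)))"
    using integral_prod_continuous[of a 0 b T F] assms by (simp add: rect_eq_cbox)
  then show "integral (rect a b T) F = integral {0..T} (\<lambda>t. integral {a..b} (\<lambda>x. F (x, t)))"
    using integral_swap_continuous[of a 0 b T "\<lambda>x t. F (x, t)", OF cont] by simp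
qed

context space_time_rectangle
begin

lemma integral_px_x_section:
  assumes "\<forall>p\<in>\<Omega>. G differentiable (at p within \<Omega>)" and "t \<in> {0..T}"
  shows "integral {a..b} (\<lambda>x. px \<Omega> G (x, t)) = G (b, t) - G (a, t)"
proof -
  have "((\<lambda>x. G (x, t)) has_vector_derivative px \<Omega> G (x, t)) (at x within {a..b})"
    if "x \<in> {a..b}" for x
    using assms that by (intro has_vector_derivative_x_section) (auto simp: rect_def)
  then show ?thesis
    using a_lt_b by (intro integral_unique fundamental_theorem_of_calculus) auto
qed

lemma integral_pt_t_section:
  assumes "\<forall>p\<in>\<Omega>. G differentiable (at p within \<Omega>)" and "x \<in> {a..b}"
  shows "integral {0..T} (\<lambda>t. pt \<Omega> G (x, t)) = G (x, T) - G (x, 0)"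
proof -
  have "((\<lambda>t. G (x, t)) has_vector_derivative pt \<Omega> G (x, t)) (at t within {0..T})"
    if "t \<in> {0..T}" for t
    using assms that by (intro has_vector_derivative_t_section) (auto simp: rect_def)
  then show ?thesis
    using T_pos by (intro integral_unique fundamental_theorem_of_calculus) auto
qed

lemma pt_eq_0_on_vanishing_side:
  assumes "G differentiable (at (x, t) within \<Omega>)" and "x \<in> {a..b}" and "t \<in> {0..T}"
    and "\<forall>s\<in>{0..T}. G (x, s) = 0"
  shows "pt \<Omega> G (x, t) = 0"
proof (rule vector_derivative_unique_within)
  show "at t within {0..T} \<noteq> bot"
    using T_pos assms(3) by (simp add: trivial_limit_within)
  show "((\<lambda>s. G (x, s)) has_vector_derivative pt \<Omega> G (x, t)) (at t within {0..T})"
    using assms(1,2) by (intro has_vector_derivative_t_section) (auto simp: rect_def)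
  show "((\<lambda>s. G (x, s)) has_vector_derivative 0) (at t within {0..T})"
    by (rule has_vector_derivative_transform[OF assms(3), where f = "\<lambda>s. 0"])
      (simp_all add: assms(4))
qed

lemma integral_px_eq_0_if_vanishes_on_sides:
  assumes "C_inf_on \<Omega> G" and "\<forall>t\<in>{0..T}. G (a, t) = 0 \<and> G (b, t) = 0"
  shows "integral \<Omega> (px \<Omega> G) = 0"
proof -
  have "integral \<Omega> (px \<Omega> G)
      = integral {0..T} (\<lambda>t. integral {a..b} (\<lambda>x. px \<Omega> G (x, t)))"
    using assms(1) by (intro integral_rect_iterated(1) C_inf_on_continuous_on C_inf_on_px)
  also have "\<dots> = integral {0..T} (\<lambda>t. 0)"
    using assms by (intro integral_cong) (simp add: integral_px_x_section C_inf_on_differentiable)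
  finally show ?thesis by simp
qed

lemma integral_pt_eq_0_if_vanishes_at_ends:
  assumes "C_inf_on \<Omega> H" and "\<forall>x\<in>{a..b}. H (x, 0) = 0 \<and> H (x, T) = 0"
  shows "integral \<Omega> (pt \<Omega> H) = 0"
proof -
  have "integral \<Omega> (pt \<Omega> H)
      = integral {a..b} (\<lambda>x. integral {0..T} (\<lambda>t. pt \<Omega> H (x, t)))"
    using assms(1) by (intro integral_rect_iterated(2) C_inf_on_continuous_on C_inf_on_pt)
  also have "\<dots> = integral {a..b} (\<lambda>x. 0)"
    using assms by (intro integral_cong) (simp add: integral_pt_t_section C_inf_on_differentiable)
  finally show ?thesis by simp
qed

end

section \<open>The first variation\<close>

lemma flux_eq_power:
  assumes "even r" and "r \<ge> 2"
  shows "flux r S u = (\<lambda>p. px S u p ^ (r - 1))"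
proof
  fix p
  have "r - 1 = Suc (r - 2)" using assms(2) by simp
  then show "flux r S u p = px S u p ^ (r - 1)"
    using assms(1) by (simp add: flux_def power_even_abs mult.commute)
qed

definition rect_bump :: "real \<Rightarrow> real \<Rightarrow> real \<Rightarrow> real \<times> real \<Rightarrow> real" where
  "rect_bump a b T p = (fst p - a) * (b - fst p) * snd p * (T - snd p)"

lemma mem_box_Pair: "p \<in> box (a, c) (b, d) \<longleftrightarrow> a < fst p \<and> fst p < b \<and> c < snd p \<and> snd p < d"
  for a b c d :: real
  by (cases p) (auto simp: mem_box Basis_prod_def)

lemma rect_bump_pos: "p \<in> box (a, 0) (b, T) \<Longrightarrow> 0 < rect_bump a b T p"
  by (simp add: rect_bump_def mem_box_Pair)

context space_time_rectangle
begin

lemma C_inf_on_flux: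
  "even r \<Longrightarrow> r \<ge> 2 \<Longrightarrow> C_inf_on \<Omega> u \<Longrightarrow> C_inf_on \<Omega> (flux r \<Omega> u)"
  by (simp add: flux_eq_power C_inf_on_power C_inf_on_px)

lemma C_inf_on_rHS:
  "C_inf_on \<Omega> u \<Longrightarrow> C_inf_on \<Omega> (flux r \<Omega> u) \<Longrightarrow>
   C_inf_on \<Omega> (rHS r \<Omega> u)"
  unfolding rHS_def[abs_def]
  by (intro C_inf_on_mult C_inf_on_add C_inf_on_px C_inf_on_pt)

lemma flux_times_px_var_u:
  assumes u: "C_inf_on \<Omega> u" and w: "C_inf_on \<Omega> w"
    and m: "C_inf_on \<Omega> m" and p: "p \<in> \<Omega>"
    and m_eq: "m = flux r \<Omega> u"
  shows "m p * px \<Omega> (var_u \<Omega> u w) p =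
      px \<Omega> (\<lambda>q. m q * (pt \<Omega> w q + u q * px \<Omega> w q - w q * px \<Omega> u q)
                           - px \<Omega> m q * u q * w q) p
    - pt \<Omega> (\<lambda>q. px \<Omega> m q * w q) p
    + rHS r \<Omega> u p * w p"
proof -
  have "var_u \<Omega> u w = (\<lambda>q. pt \<Omega> w q - w q * px \<Omega> u q + u q * px \<Omega> w q)"
    by (simp add: var_u_def fun_eq_iff)
  then show ?thesis
    unfolding rHS_def m_eq[symmetric]
    by (simp add: partials_add[OF p] partials_diff[OF p] partials_mult[OF p]
        C_inf_on_differentiable[OF _ p] C_inf_on_px C_inf_on_pt u w m algebra_simps)
qed

lemma first_var_eq_integral_rHS:
  assumes u: "C_inf_on \<Omega> u" and m: "C_inf_on \<Omega> (flux r \<Omega> u)"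
    and u_sides: "\<forall>t\<in>{0..T}. u (a, t) = 0 \<and> u (b, t) = 0"
    and adm: "admissible a b T w"
  shows "first_var r a b T u w =
           integral {0..T} (\<lambda>t. integral {a..b} (\<lambda>x. rHS r \<Omega> u (x, t) * w (x, t)))"
proof -
  let ?m = "flux r \<Omega> u"
  have w: "C_inf_on \<Omega> w" and w_ends: "\<forall>x\<in>{a..b}. w (x, 0) = 0 \<and> w (x, T) = 0"
    and w_sides: "\<forall>t\<in>{0..T}. w (a, t) = 0 \<and> w (b, t) = 0"
    using adm by (auto simp: admissible_def)
  define G where "G q = ?m q * (pt \<Omega> w q + u q * px \<Omega> w q - w q * px \<Omega> u q) - px \<Omega> ?m q * u q * w q" for q
  define H where "H q = px \<Omega> ?m q * w q" for q
  define F where "F q = rHS r \<Omega> u q * w q" for q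
  note smooth = u w m C_inf_on_px C_inf_on_pt C_inf_on_mult C_inf_on_add C_inf_on_diff
  have G: "C_inf_on \<Omega> G" and H: "C_inf_on \<Omega> H" and F: "C_inf_on \<Omega> F"
    unfolding G_def H_def F_def rHS_def by (intro smooth)+
  have "first_var r a b T u w = integral {0..T} (\<lambda>t. integral {a..b} (\<lambda>x.
          px \<Omega> G (x, t) - pt \<Omega> H (x, t) + F (x, t)))"
    unfolding first_var_def G_def[abs_def] H_def[abs_def] F_def
    by (intro integral_cong flux_times_px_var_u[OF u w m _ refl]) (simp add: rect_def)
  also have "\<dots> = integral \<Omega> (\<lambda>p. px \<Omega> G p - pt \<Omega> H p + F p)"
    by (intro integral_rect_iterated(1)[symmetric] C_inf_on_continuous_on smooth G H F)
  also have "\<dots> = integral \<Omega> (px \<Omega> G) - integral \<Omega> (pt \<Omega> H) + integral \<Omega> F"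
    by (simp add: integral_add integral_diff integrable_on_rect C_inf_on_continuous_on smooth G H F)
  also have "integral \<Omega> (px \<Omega> G) = 0"
  proof (rule integral_px_eq_0_if_vanishes_on_sides[OF G])
    have "pt \<Omega> w (x, t) = 0" if "x \<in> {a, b}" and "t \<in> {0..T}" for x t
    proof (rule pt_eq_0_on_vanishing_side)
      show x: "x \<in> {a..b}" using that(1) a_lt_b by auto
      then show "w differentiable (at (x, t) within \<Omega>)"
        using that(2) by (intro C_inf_on_differentiable[OF w]) (simp add: rect_def)
      show "\<forall>s\<in>{0..T}. w (x, s) = 0" using w_sides that(1) by auto
    qed (use that in simp)
    then show "\<forall>t\<in>{0..T}. G (a, t) = 0 \<and> G (b, t) = 0"
      using u_sides w_sides by (simp add: G_def)
  qed
  also have "integral \<Omega> (pt \<Omega> H) = 0"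
    using w_ends by (intro integral_pt_eq_0_if_vanishes_at_ends[OF H]) (simp add: H_def)
  also have "integral \<Omega> F = integral {0..T} (\<lambda>t. integral {a..b} (\<lambda>x. F (x, t)))"
    by (intro integral_rect_iterated(1) C_inf_on_continuous_on F)
  finally show ?thesis by (simp add: F_def)
qed

lemma C_inf_on_rect_bump: "C_inf_on \<Omega> (rect_bump a b T)"
  unfolding rect_bump_def[abs_def]
  by (intro C_inf_on_mult C_inf_on_diff C_inf_on_fst C_inf_on_snd C_inf_on_const)

lemma eq_0_if_integral_square_rect_bump_eq_0:
  fixes g :: "real \<times> real \<Rightarrow> real"
  assumes g: "continuous_on \<Omega> g"
    and int_0: "integral \<Omega> (\<lambda>p. g p * (g p * rect_bump a b T p)) = 0"
  shows "\<forall>p\<in>\<Omega>. g p = 0"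
proof -
  let ?f = "\<lambda>p. g p * (g p * rect_bump a b T p)"
  have box_ne: "box (a, 0) (b, T) \<noteq> {}"
    using a_lt_b T_pos by (simp add: box_ne_empty Basis_prod_def)
  have cont: "continuous_on \<Omega> ?f"
    by (intro continuous_on_mult g C_inf_on_continuous_on C_inf_on_rect_bump)
  have "(?f has_integral 0) (cbox (a, 0) (b, T))"
    using integrable_integral[OF integrable_on_rect[OF cont]] int_0 by (simp add: rect_eq_cbox)
  moreover have "0 \<le> ?f p" if "p \<in> box (a, 0) (b, T)" for p
    using rect_bump_pos[OF that] by (simp add: mult.assoc[symmetric])
  ultimately have "?f p = 0" if "p \<in> cbox (a, 0) (b, T)" for p
    using cont box_ne that by (intro has_integral_0_cbox_imp_0) (simp_all add: rect_eq_cbox)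
  then have on_box: "g p = 0" if "p \<in> box (a, 0) (b, T)" for p
    using rect_bump_pos[OF that] box_subset_cbox that by fastforce
  show ?thesis
  proof
    fix p assume "p \<in> \<Omega>"
    then have "p \<in> closure (box (a, 0) (b, T))" and "continuous_on (closure (box (a, 0) (b, T))) g"
      using g closure_box[OF box_ne] by (simp_all add: rect_eq_cbox)
    then show "g p = 0"
      using continuous_constant_on_closure on_box by blast
  qed
qed

lemma rHS_eq_0_if_first_var_vanishes:
  assumes u: "C_inf_on \<Omega> u" and m: "C_inf_on \<Omega> (flux r \<Omega> u)"
    and u_sides: "\<forall>t\<in>{0..T}. u (a, t) = 0 \<and> u (b, t) = 0"
    and stationary: "\<forall>w. admissible a b T w \<longrightarrow> first_var r a b T u w = 0"
  shows "\<forall>p\<in>\<Omega>. rHS r \<Omega> u p = 0"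
proof (rule eq_0_if_integral_square_rect_bump_eq_0)
  let ?w = "\<lambda>p. rHS r \<Omega> u p * rect_bump a b T p"
  have rHS: "C_inf_on \<Omega> (rHS r \<Omega> u)"
    using u m by (rule C_inf_on_rHS)
  then show "continuous_on \<Omega> (rHS r \<Omega> u)"
    by (rule C_inf_on_continuous_on)
  have adm: "admissible a b T ?w"
    unfolding admissible_def using C_inf_on_mult[OF rHS C_inf_on_rect_bump]
    by (simp add: rect_bump_def)
  have "0 = first_var r a b T u ?w"
    using stationary adm by simp
  also have "\<dots> = integral {0..T} (\<lambda>t. integral {a..b} (\<lambda>x. rHS r \<Omega> u (x, t) * ?w (x, t)))"
    by (rule first_var_eq_integral_rHS[OF u m u_sides adm])
  also have "\<dots> = integral \<Omega> (\<lambda>p. rHS r \<Omega> u p * ?w p)"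
    using rHS by (intro integral_rect_iterated(1)[symmetric] C_inf_on_continuous_on
        C_inf_on_mult C_inf_on_rect_bump)
  finally show "integral \<Omega> (\<lambda>p. rHS r \<Omega> u p * ?w p) = 0" by simp
qed

end

theorem mainTheorem2:
  fixes r :: nat and a b T :: real and u :: "real \<times> real \<Rightarrow> real"
  assumes "even r" and "r \<ge> 2" and "a < b" and "T > 0"
    and "C_inf_on (rect a b T) u"
    and "\<forall>t\<in>{0..T}. u (a, t) = 0 \<and> u (b, t) = 0"
  shows "(\<forall>w. admissible a b T w \<longrightarrow>
            first_var r a b T u w =
              integral {0..T} (\<lambda>t. integral {a..b} (\<lambda>x.
                 rHS r (rect a b T) u (x, t) * w (x, t))))
       \<and> ((\<forall>w. admissible a b T w \<longrightarrow> first_var r a b T u w = 0)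
            \<longleftrightarrow> (\<forall>p\<in>rect a b T. rHS r (rect a b T) u p = 0))"
proof -
  interpret space_time_rectangle a b T
    using assms(3,4) by unfold_locales
  have flux: "C_inf_on (rect a b T) (flux r (rect a b T) u)"
    using C_inf_on_flux[OF assms(1,2,5)] .
  note first_var_eq = first_var_eq_integral_rHS[OF assms(5) flux assms(6)]
  show ?thesis
  proof (intro conjI iffI allI impI)
    show "first_var r a b T u w =
        integral {0..T} (\<lambda>t. integral {a..b} (\<lambda>x. rHS r (rect a b T) u (x, t) * w (x, t)))"
      if "admissible a b T w" for w
      using first_var_eq[OF that] .
  next
    show "\<forall>p\<in>rect a b T. rHS r (rect a b T) u p = 0"
      if "\<forall>w. admissible a b T w \<longrightarrow> first_var r a b T u w = 0"
      using rHS_eq_0_if_first_var_vanishes[OF assms(5) flux assms(6) that] .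
  next
    fix w assume rHS_0: "\<forall>p\<in>rect a b T. rHS r (rect a b T) u p = 0" and w: "admissible a b T w"
    have "first_var r a b T u w = integral {0..T} (\<lambda>t. integral {a..b} (\<lambda>x. 0))"
      unfolding first_var_eq[OF w] using rHS_0 by (intro integral_cong) (simp add: rect_def)
    then show "first_var r a b T u w = 0" by simp
  qed
qed

end
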